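(* Let $P(\lambda)=\sum_{j=0}^m A_j\lambda^j$ be an $n\times n$ complex matrix polynomial with $\det A_m\neq0$, let $\mu_1\neq\mu_2$ be complex numbers, let $w=\{\omega_0,\dots,\omega_m\}$ be nonnegative weights with $\omega_0>0$, and suppose that the function $\gamma\mapsto s_{2n-1}(F[P(\mu_1,\mu_2);\gamma])$, $\gamma\ge0$ real, attains its maximum at $\gamma_*=0$. For $i=1,2$ let $u_i,v_i\in\mathbb{C}^n$ be a pair of unit left and right singular vectors of $P(\mu_i)$ corresponding to $\sigma_i=s_n(P(\mu_i))$, i.e. $P(\mu_i)v_i=\sigma_iu_i$, and suppose $v_1,v_2$ are linearly independent. Define $$\Delta_0=-[u_1\ u_2]\begin{bmatrix}\sigma_1&0\\0&\sigma_2\end{bmatrix}[v_1\ v_2]^{\dagger},\qquad Q_0(\lambda)=A_m\lambda^m+\dots+A_1\lambda+(A_0+\Delta_0),$$ where $[v_1\ v_2]^\dagger$ is the Moore–Penrose pseudoinverse. Then $Q_0$ lies on the boundary of $\mathcal{B}(P,\|\Delta_0\|/\omega_0,w)$, and $\mu_1,\mu_2$ are eigenvalues of $Q_0$ with eigenvectors $v_1,v_2$ respectively.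
   Context: $\|\cdot\|$ is the spectral norm. For $\varepsilon\ge0$, $\mathcal{B}(P,\varepsilon,w)$ is the set of matrix polynomials $\sum_{j=0}^m(A_j+\Delta_j)\lambda^j$ with $\Delta_j\in\mathbb{C}^{n\times n}$ and $\|\Delta_j\|\le\varepsilon\omega_j$ for all $j$; its boundary consists of those members for which $\|\Delta_j\|=\varepsilon\omega_j$ for some $j$. $P[\mu_1,\mu_2]=\frac{P(\mu_1)-P(\mu_2)}{\mu_1-\mu_2}$, $F[P(\mu_1,\mu_2);\gamma]=\begin{bmatrix} P(\mu_1) & 0\\ \gamma P[\mu_1,\mu_2] & P(\mu_2)\end{bmatrix}$. Singular values are ordered decreasingly, so $s_n(M)$ is the smallest singular value of an $n\times n$ matrix $M$ and $s_{2n-1}$ the second smallest of a $2n\times2n$ matrix. *)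

theory Defs
  imports "Jordan_Normal_Form.Schur_Decomposition" "Jordan_Normal_Form.Char_Poly"
begin

definition vnorm :: "complex vec \<Rightarrow> real" where
  "vnorm v = sqrt (\<Sum>i<dim_vec v. (cmod (v $ i))\<^sup>2)"

definition spec_norm :: "complex mat \<Rightarrow> real" where
  "spec_norm M = Sup {vnorm (M *\<^sub>v x) | x. x \<in> carrier_vec (dim_col M) \<and> vnorm x = 1}"

definition sing_vals :: "complex mat \<Rightarrow> real list" where
  "sing_vals M = (THE ls. length ls = dim_col M \<and> sorted_wrt (\<ge>) ls \<and> (\<forall>s\<in>set ls. 0 \<le> s) \<and>
      char_poly (mat_adjoint M * M) = prod_list (map (\<lambda>s. [:- complex_of_real (s\<^sup>2), 1:]) ls))"

(* s_k(M), the k-th largest singular value (k counted from 1) *)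
definition sval :: "complex mat \<Rightarrow> nat \<Rightarrow> real" where
  "sval M k = sing_vals M ! (k - 1)"

fun mp_eval :: "(nat \<Rightarrow> complex mat) \<Rightarrow> nat \<Rightarrow> complex \<Rightarrow> complex mat" where
  "mp_eval A 0 z = A 0"
| "mp_eval A (Suc j) z = mp_eval A j z + (z ^ Suc j) \<cdot>\<^sub>m A (Suc j)"

definition mp_divdiff :: "(nat \<Rightarrow> complex mat) \<Rightarrow> nat \<Rightarrow> complex \<Rightarrow> complex \<Rightarrow> complex mat" where
  "mp_divdiff A m \<mu>1 \<mu>2 = (1 / (\<mu>1 - \<mu>2)) \<cdot>\<^sub>m (mp_eval A m \<mu>1 - mp_eval A m \<mu>2)"

definition Fmat :: "nat \<Rightarrow> (nat \<Rightarrow> complex mat) \<Rightarrow> nat \<Rightarrow> complex \<Rightarrow> complex \<Rightarrow> real \<Rightarrow> complex mat" where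
  "Fmat n A m \<mu>1 \<mu>2 \<gamma> = four_block_mat (mp_eval A m \<mu>1) (0\<^sub>m n n)
      (complex_of_real \<gamma> \<cdot>\<^sub>m mp_divdiff A m \<mu>1 \<mu>2) (mp_eval A m \<mu>2)"

definition pinv :: "complex mat \<Rightarrow> complex mat" where
  "pinv M = (THE X. X \<in> carrier_mat (dim_col M) (dim_row M) \<and> M * X * M = M \<and> X * M * X = X \<and>
      mat_adjoint (M * X) = M * X \<and> mat_adjoint (X * M) = X * M)"

definition in_mp_ball :: "nat \<Rightarrow> nat \<Rightarrow> (nat \<Rightarrow> complex mat) \<Rightarrow> real \<Rightarrow> (nat \<Rightarrow> real) \<Rightarrow> (nat \<Rightarrow> complex mat) \<Rightarrow> bool" where
  "in_mp_ball n m A \<epsilon> w Q = (\<forall>j\<le>m. \<exists>\<Delta>. \<Delta> \<in> carrier_mat n n \<and> spec_norm \<Delta> \<le> \<epsilon> * w j \<and> Q j = A j + \<Delta>)"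

definition on_mp_ball_boundary :: "nat \<Rightarrow> nat \<Rightarrow> (nat \<Rightarrow> complex mat) \<Rightarrow> real \<Rightarrow> (nat \<Rightarrow> real) \<Rightarrow> (nat \<Rightarrow> complex mat) \<Rightarrow> bool" where
  "on_mp_ball_boundary n m A \<epsilon> w Q = (\<exists>\<Delta>. (\<forall>j\<le>m. \<Delta> j \<in> carrier_mat n n \<and> spec_norm (\<Delta> j) \<le> \<epsilon> * w j \<and> Q j = A j + \<Delta> j)
      \<and> (\<exists>j\<le>m. spec_norm (\<Delta> j) = \<epsilon> * w j))"

definition perturb0 :: "(nat \<Rightarrow> complex mat) \<Rightarrow> complex mat \<Rightarrow> nat \<Rightarrow> complex mat" where
  "perturb0 A D = (\<lambda>j. if j = 0 then A 0 + D else A j)"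

definition mp_eigenpair :: "nat \<Rightarrow> nat \<Rightarrow> (nat \<Rightarrow> complex mat) \<Rightarrow> complex \<Rightarrow> complex vec \<Rightarrow> bool" where
  "mp_eigenpair n m Q \<mu> v = (det (mp_eval Q m \<mu>) = 0 \<and> v \<in> carrier_vec n \<and> v \<noteq> 0\<^sub>v n \<and>
      mp_eval Q m \<mu> *\<^sub>v v = 0\<^sub>v n)"

end

theory Submission
  imports Defs
begin

(* Since v1, v2 are independent, the pseudoinverse of [v1 v2] is a left inverse of it, so
   Delta0 v_i = -sigma_i u_i = -P(mu_i) v_i and hence Q0(mu_i) v_i = 0.  Only the constant
   coefficient is perturbed, and eps = ||Delta0|| / w0 is chosen so that this perturbation meets
   its bound eps * w0 exactly, which puts Q0 on the boundary of the ball. *)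

lemma mat_adjoint_carrier [simp]: "A \<in> carrier_mat n k \<Longrightarrow> mat_adjoint A \<in> carrier_mat k n"
  unfolding mat_adjoint_def by auto

lemma dim_mat_adjoint [simp]:
  "dim_row (mat_adjoint A) = dim_col A" "dim_col (mat_adjoint A) = dim_row A"
  unfolding mat_adjoint_def by auto

lemma index_mat_adjoint [simp]:
  "i < dim_col A \<Longrightarrow> j < dim_row A \<Longrightarrow> mat_adjoint A $$ (i, j) = conjugate (A $$ (j, i))"
  unfolding mat_adjoint_def by (auto simp: mat_of_rows_index)

lemma mat_adjoint_mult:
  fixes A B :: "'a :: conjugatable_field mat"
  assumes "A \<in> carrier_mat n k" and "B \<in> carrier_mat k l"
  shows "mat_adjoint (A * B) = mat_adjoint B * mat_adjoint A"
  using assms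
  by (intro eq_matI) (auto simp: scalar_prod_def sum_conjugate conjugate_dist_mul mult.commute
      intro!: sum.cong)

lemma mat_adjoint_adjoint [simp]: "mat_adjoint (mat_adjoint (A :: 'a :: conjugatable_field mat)) = A"
  by (rule eq_matI) auto

lemma conjugate_one [simp]: "conjugate (1 :: 'a :: conjugatable_field) = 1"
proof -
  have "conjugate (1 :: 'a) = conjugate 1 * conjugate 1"
    by (metis conjugate_dist_mul mult_1)
  moreover have "conjugate (1 :: 'a) \<noteq> 0" by simp
  ultimately show ?thesis by (metis mult_cancel_right1)
qed

lemma mat_adjoint_one [simp]: "mat_adjoint (1\<^sub>m k :: 'a :: conjugatable_field mat) = 1\<^sub>m k"
  by (rule eq_matI) auto

lemma cscalar_prod_mat_adjoint:
  fixes V :: "'a :: conjugatable_field mat"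
  assumes V: "V \<in> carrier_mat n k" and x: "x \<in> carrier_vec k" and y: "y \<in> carrier_vec n"
  shows "x \<bullet>c (mat_adjoint V *\<^sub>v y) = (V *\<^sub>v x) \<bullet>c y"
proof -
  have "x \<bullet>c (mat_adjoint V *\<^sub>v y) = (\<Sum>j<k. \<Sum>i<n. V $$ (i, j) * x $ j * conjugate (y $ i))"
    using V x y by (auto simp: scalar_prod_def sum_conjugate conjugate_dist_mul sum_distrib_left
        ac_simps atLeast0LessThan intro!: sum.cong)
  also have "\<dots> = (V *\<^sub>v x) \<bullet>c y"
    using V x y by (subst sum.swap) (auto simp: scalar_prod_def sum_distrib_right atLeast0LessThan)
  finally show ?thesis .
qed

definition full_col_rank :: "'a :: semiring_0 mat \<Rightarrow> bool" where
  "full_col_rank V \<longleftrightarrow>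
     (\<forall>c \<in> carrier_vec (dim_col V). V *\<^sub>v c = 0\<^sub>v (dim_row V) \<longrightarrow> c = 0\<^sub>v (dim_col V))"

lemma full_col_rank_mat_of_cols2:
  fixes v1 v2 :: "'a :: comm_ring_1 vec"
  assumes v1: "v1 \<in> carrier_vec n" and v2: "v2 \<in> carrier_vec n"
    and indep: "\<forall>a b. a \<cdot>\<^sub>v v1 + b \<cdot>\<^sub>v v2 = 0\<^sub>v n \<longrightarrow> a = 0 \<and> b = 0"
  shows "full_col_rank (mat_of_cols n [v1, v2])"
  unfolding full_col_rank_def
proof (intro ballI impI)
  fix c assume c: "c \<in> carrier_vec (dim_col (mat_of_cols n [v1, v2]))"
    and Vc: "mat_of_cols n [v1, v2] *\<^sub>v c = 0\<^sub>v (dim_row (mat_of_cols n [v1, v2]))"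
  have "mat_of_cols n [v1, v2] *\<^sub>v c = c $ 0 \<cdot>\<^sub>v v1 + c $ 1 \<cdot>\<^sub>v v2"
    using c v1 v2 by (intro eq_vecI)
      (auto simp: scalar_prod_def mat_of_cols_index mult.commute numeral_2_eq_2)
  then have "c $ 0 = 0 \<and> c $ 1 = 0" using Vc indep by auto
  then show "c = 0\<^sub>v (dim_col (mat_of_cols n [v1, v2]))"
    using c by (intro eq_vecI) (auto simp: less_Suc_eq)
qed

lemma full_col_rank_mult_left_cancel:
  fixes V :: "'a :: ring mat"
  assumes V: "V \<in> carrier_mat n k" "full_col_rank V"
    and B: "B \<in> carrier_mat k l" and C: "C \<in> carrier_mat k l" and eq: "V * B = V * C"
  shows "B = C"
proof (rule mat_col_eqI)
  fix j assume "j < dim_col C"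
  with C have j: "j < l" by simp
  have "V *\<^sub>v (col B j - col C j) = V *\<^sub>v col B j - V *\<^sub>v col C j"
    using B C j by (intro mult_minus_distrib_mat_vec[OF V(1)]) auto
  also have "\<dots> = col (V * B) j - col (V * C) j"
    unfolding col_mult2[OF V(1) B j] col_mult2[OF V(1) C j] ..
  also have "\<dots> = 0\<^sub>v n" using eq V C j by simp
  finally have diff: "col B j - col C j = 0\<^sub>v k"
    using V B C j unfolding full_col_rank_def by auto
  show "col B j = col C j"
  proof (rule eq_vecI)
    fix i assume "i < dim_vec (col C j)"
    then show "col B j $ i = col C j $ i"
      using arg_cong[OF diff, of "\<lambda>v. v $ i"] B C by simp
  qed (use B C in simp)
qed (use B C in auto)

lemma gram_mat_det_nonzero:
  fixes V :: "'a :: conjugatable_ordered_field mat"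
  assumes V: "V \<in> carrier_mat n k" "full_col_rank V"
  shows "det (mat_adjoint V * V) \<noteq> 0"
proof
  have G: "mat_adjoint V * V \<in> carrier_mat k k" using V by auto
  assume "det (mat_adjoint V * V) = 0"
  then obtain c where c: "c \<in> carrier_vec k" "c \<noteq> 0\<^sub>v k" and Gc: "(mat_adjoint V * V) *\<^sub>v c = 0\<^sub>v k"
    using det_0_iff_vec_prod_zero[OF G] by auto
  have "(V *\<^sub>v c) \<bullet>c (V *\<^sub>v c) = c \<bullet>c (mat_adjoint V *\<^sub>v (V *\<^sub>v c))"
    using cscalar_prod_mat_adjoint[OF V(1) c(1), of "V *\<^sub>v c"] V c by simp
  also have "mat_adjoint V *\<^sub>v (V *\<^sub>v c) = 0\<^sub>v k"
    using Gc V c by (metis assoc_mult_mat_vec mat_adjoint_carrier)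
  also have "c \<bullet>c 0\<^sub>v k = 0" using c by simp
  finally have "V *\<^sub>v c = 0\<^sub>v n"
    using conjugate_square_eq_0_vec[of "V *\<^sub>v c" n] V c by simp
  then show False using V c unfolding full_col_rank_def by auto
qed

lemma full_col_rank_left_inverse:
  fixes V :: "'a :: ring_1 mat"
  assumes V: "V \<in> carrier_mat n k" "full_col_rank V"
    and X: "X \<in> carrier_mat k n" and VXV: "V * X * V = V"
  shows "X * V = 1\<^sub>m k"
proof (rule full_col_rank_mult_left_cancel[OF V])
  show "V * (X * V) = V * 1\<^sub>m k" using assoc_mult_mat[OF V(1) X V(1)] VXV V by simp
qed (use V X in auto)

definition moore_penrose_inverse :: "'a :: conjugatable_field mat \<Rightarrow> 'a mat \<Rightarrow> bool" where
  "moore_penrose_inverse M X \<longleftrightarrow> X \<in> carrier_mat (dim_col M) (dim_row M) \<and>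
     M * X * M = M \<and> X * M * X = X \<and> mat_adjoint (M * X) = M * X \<and> mat_adjoint (X * M) = X * M"

lemma pinv_altdef: "pinv M = (THE X. moore_penrose_inverse M X)"
  unfolding pinv_def moore_penrose_inverse_def ..

lemma moore_penrose_inverse_unique:
  fixes V :: "'a :: conjugatable_field mat"
  assumes V: "V \<in> carrier_mat n k" "full_col_rank V"
    and X: "moore_penrose_inverse V X" and Y: "moore_penrose_inverse V Y"
  shows "X = Y"
proof -
  have Xc: "X \<in> carrier_mat k n" and Yc: "Y \<in> carrier_mat k n"
    and hX: "mat_adjoint (V * X) = V * X" and hY: "mat_adjoint (V * Y) = V * Y"
    and VYV: "V * Y * V = V" and XVX: "X * V * X = X"
    using X Y V unfolding moore_penrose_inverse_def by auto
  have XV: "X * V = 1\<^sub>m k"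
    using full_col_rank_left_inverse[OF V Xc] X unfolding moore_penrose_inverse_def by auto
  have aX: "mat_adjoint X \<in> carrier_mat n k" and aV: "mat_adjoint V \<in> carrier_mat k n"
    using Xc V by auto
  have adjV: "mat_adjoint V = mat_adjoint V * (V * Y)"
    using arg_cong[OF VYV, of mat_adjoint] hY mat_adjoint_mult[of "V * Y" n n V k] V Yc by simp
  have "V * X = mat_adjoint X * mat_adjoint V"
    using hX mat_adjoint_mult[OF V(1) Xc] by simp
  also have "\<dots> = (mat_adjoint X * mat_adjoint V) * (V * Y)"
    using adjV assoc_mult_mat[OF aX aV, of "V * Y" n] V Yc by simp
  also have "\<dots> = V * (X * V * Y)"
    using hX mat_adjoint_mult[OF V(1) Xc] assoc_mult_mat[OF V(1) Xc, of "V * Y" n]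
      assoc_mult_mat[OF Xc V(1) Yc] V Yc by simp
  also have "\<dots> = V * Y" using XV Yc by simp
  finally have VX: "V * X = V * Y" .
  have "X = X * V * X" using XVX ..
  also have "\<dots> = X * V * Y" using VX assoc_mult_mat[OF Xc V(1)] Xc Yc by simp
  also have "\<dots> = Y" using XV Yc by simp
  finally show ?thesis .
qed

lemma moore_penrose_inverse_exists:
  fixes V :: "'a :: conjugatable_ordered_field mat"
  assumes V: "V \<in> carrier_mat n k" "full_col_rank V"
  shows "\<exists>X. moore_penrose_inverse V X"
proof -
  define G where "G = mat_adjoint V * V"
  have aV: "mat_adjoint V \<in> carrier_mat k n" using V by simp
  have G: "G \<in> carrier_mat k k" unfolding G_def using aV V(1) by (rule mult_carrier_mat)
  have "G \<in> Units (ring_mat TYPE('a) k k)"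
    using det_non_zero_imp_unit[OF G] gram_mat_det_nonzero[OF V] unfolding G_def by simp
  then obtain B where "mat_inverse G = Some B"
    using mat_inverse(1)[OF G, of k] by (cases "mat_inverse G") auto
  then have GB: "G * B = 1\<^sub>m k" and BG: "B * G = 1\<^sub>m k" and B: "B \<in> carrier_mat k k"
    using mat_inverse(2)[OF G] by auto
  have aB: "mat_adjoint B \<in> carrier_mat k k" using B by simp
  have adjG: "mat_adjoint G = G"
    using mat_adjoint_mult[OF aV V(1)] unfolding G_def by simp
  have "mat_adjoint B = mat_adjoint B * G * B"
    using GB assoc_mult_mat[OF aB G B] right_mult_one_mat[OF aB] by simp
  also have "mat_adjoint B * G = 1\<^sub>m k"
    using mat_adjoint_mult[OF G B] GB adjG by simp
  finally have adjB: "mat_adjoint B = B" using B by simp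
  define X where "X = B * mat_adjoint V"
  have X: "X \<in> carrier_mat k n" unfolding X_def using B aV by (rule mult_carrier_mat)
  have XV: "X * V = 1\<^sub>m k"
    using BG assoc_mult_mat[OF B aV V(1)] unfolding X_def G_def by simp
  have "mat_adjoint (V * X) = V * X"
    using mat_adjoint_mult[OF V(1) X] mat_adjoint_mult[OF B aV] adjB
      assoc_mult_mat[OF V(1) B aV] unfolding X_def by simp
  then have "moore_penrose_inverse V X"
    using XV X V assoc_mult_mat[OF V(1) X V(1)] unfolding moore_penrose_inverse_def by simp
  then show ?thesis ..
qed

lemma pinv_moore_penrose_inverse:
  assumes "V \<in> carrier_mat n k" "full_col_rank V"
  shows "moore_penrose_inverse V (pinv V)"
  unfolding pinv_altdef
  by (rule theI') (use assms moore_penrose_inverse_exists moore_penrose_inverse_unique in blast)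

lemma pinv_left_inverse:
  assumes V: "V \<in> carrier_mat n k" "full_col_rank V"
  shows "pinv V \<in> carrier_mat k n" "pinv V * V = 1\<^sub>m k"
  using pinv_moore_penrose_inverse[OF V] full_col_rank_left_inverse[OF V] V
  unfolding moore_penrose_inverse_def by auto

lemma mult_pinv_col:
  assumes V: "V \<in> carrier_mat n k" "full_col_rank V" and W: "W \<in> carrier_mat l k" and j: "j < k"
  shows "(W * pinv V) *\<^sub>v col V j = col W j"
proof -
  have P: "pinv V \<in> carrier_mat k n" "pinv V * V = 1\<^sub>m k" using pinv_left_inverse[OF V] by auto
  have WP: "W * pinv V \<in> carrier_mat l n" using W P(1) by (rule mult_carrier_mat)
  have "(W * pinv V) *\<^sub>v col V j = col (W * pinv V * V) j"
    unfolding col_mult2[OF WP V(1) j] ..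
  also have "W * pinv V * V = W" using assoc_mult_mat[OF W P(1) V(1)] P(2) W by simp
  finally show ?thesis .
qed

lemma col_mat_of_cols_mult_mat_diag:
  fixes us :: "'a :: comm_semiring_1 vec list"
  assumes "j < length us" and "us ! j \<in> carrier_vec n"
  shows "col (mat_of_cols n us * mat_diag (length us) f) j = f j \<cdot>\<^sub>v us ! j"
  using assms by (auto simp: mat_diag_mult_right[OF mat_of_cols_carrier(1)] mat_of_cols_index
      mult.commute intro!: eq_vecI)

lemma vnorm_nonneg: "0 \<le> vnorm v"
  unfolding vnorm_def by (auto intro: sum_nonneg)

lemma vnorm_zero_vec [simp]: "vnorm (0\<^sub>v n) = 0"
  unfolding vnorm_def by simp

lemma dim_vec_pos_if_vnorm_eq_1: "vnorm v = 1 \<Longrightarrow> 0 < dim_vec v"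
  unfolding vnorm_def by (cases "dim_vec v") auto

lemma vnorm_unit_vec: "j < k \<Longrightarrow> vnorm (unit_vec k j) = 1"
  unfolding vnorm_def unit_vec_def by (simp add: if_distrib[of cmod] if_distrib[of power2] cong: if_cong)

lemma norm_index_le_vnorm:
  assumes "i < dim_vec x"
  shows "cmod (x $ i) \<le> vnorm x"
proof -
  have "(cmod (x $ i))\<^sup>2 \<le> (\<Sum>j<dim_vec x. (cmod (x $ j))\<^sup>2)"
    using assms by (intro member_le_sum) auto
  then show ?thesis unfolding vnorm_def by (metis norm_ge_zero real_le_rsqrt)
qed

lemma spec_norm_set_bdd_above:
  "bdd_above {vnorm (M *\<^sub>v x) | x. x \<in> carrier_vec (dim_col M) \<and> vnorm x = 1}"
proof (rule bdd_aboveI)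
  fix r assume "r \<in> {vnorm (M *\<^sub>v x) | x. x \<in> carrier_vec (dim_col M) \<and> vnorm x = 1}"
  then obtain x where x: "x \<in> carrier_vec (dim_col M)" "vnorm x = 1" and r: "r = vnorm (M *\<^sub>v x)"
    by auto
  have row_bound: "cmod ((M *\<^sub>v x) $ i) \<le> (\<Sum>j<dim_col M. cmod (M $$ (i, j)))"
    if i: "i < dim_row M" for i
  proof -
    have "cmod ((M *\<^sub>v x) $ i) \<le> (\<Sum>j<dim_col M. cmod (M $$ (i, j)) * cmod (x $ j))"
      using x i by (auto simp: scalar_prod_def atLeast0LessThan norm_mult intro: norm_sum[THEN order_trans])
    also have "\<dots> \<le> (\<Sum>j<dim_col M. cmod (M $$ (i, j)))"
      using norm_index_le_vnorm[of _ x] x by (intro sum_mono mult_left_le) auto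
    finally show ?thesis .
  qed
  have "r = sqrt (\<Sum>i<dim_row M. (cmod ((M *\<^sub>v x) $ i))\<^sup>2)" using r unfolding vnorm_def by simp
  also have "\<dots> \<le> sqrt (\<Sum>i<dim_row M. (\<Sum>j<dim_col M. cmod (M $$ (i, j)))\<^sup>2)"
    by (intro real_sqrt_le_mono sum_mono power_mono row_bound) auto
  finally show "r \<le> sqrt (\<Sum>i<dim_row M. (\<Sum>j<dim_col M. cmod (M $$ (i, j)))\<^sup>2)" .
qed

lemma spec_norm_nonneg:
  assumes "0 < dim_col M"
  shows "0 \<le> spec_norm M"
proof -
  have "vnorm (M *\<^sub>v unit_vec (dim_col M) 0) \<le> spec_norm M"
    unfolding spec_norm_def
    by (rule cSup_upper[OF _ spec_norm_set_bdd_above]) (use assms vnorm_unit_vec in auto)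
  then show ?thesis using vnorm_nonneg order_trans by blast
qed

lemma spec_norm_zero_mat:
  assumes "0 < k"
  shows "spec_norm (0\<^sub>m n k) = 0"
proof -
  have "0\<^sub>m n k *\<^sub>v x = 0\<^sub>v n" if "x \<in> carrier_vec k" for x :: "complex vec"
    using that by (intro eq_vecI) (auto simp: scalar_prod_def)
  then have "{vnorm (0\<^sub>m n k *\<^sub>v x) | x. x \<in> carrier_vec (dim_col (0\<^sub>m n k :: complex mat)) \<and> vnorm x = 1} = {0}"
    using assms vnorm_unit_vec[of 0 k] by (auto intro!: exI[of _ "unit_vec k 0"])
  then show ?thesis unfolding spec_norm_def by simp
qed

lemma mp_eval_carrier: "\<forall>j\<le>m. A j \<in> carrier_mat n n \<Longrightarrow> mp_eval A m z \<in> carrier_mat n n"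
  by (induction m) auto

lemma mp_eval_perturb0:
  assumes A: "\<forall>j\<le>m. A j \<in> carrier_mat n n" and D: "D \<in> carrier_mat n n"
  shows "mp_eval (perturb0 A D) m z = mp_eval A m z + D"
  using A
proof (induction m)
  case 0
  then show ?case by (simp add: perturb0_def)
next
  case (Suc m)
  have P: "mp_eval A m z \<in> carrier_mat n n" using mp_eval_carrier Suc.prems by simp
  have T: "z ^ Suc m \<cdot>\<^sub>m A (Suc m) \<in> carrier_mat n n" using Suc.prems by simp
  have "mp_eval (perturb0 A D) (Suc m) z = mp_eval A m z + D + z ^ Suc m \<cdot>\<^sub>m A (Suc m)"
    using Suc by (simp add: perturb0_def)
  also have "\<dots> = mp_eval A m z + z ^ Suc m \<cdot>\<^sub>m A (Suc m) + D"
    using assoc_add_mat[OF P D T] comm_add_mat[OF D T] assoc_add_mat[OF P T D] by simp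
  finally show ?case by simp
qed

lemma mp_eigenpair_perturb0:
  assumes A: "\<forall>j\<le>m. A j \<in> carrier_mat n n" and D: "D \<in> carrier_mat n n"
    and v: "v \<in> carrier_vec n" "v \<noteq> 0\<^sub>v n" and Dv: "D *\<^sub>v v = - (mp_eval A m \<mu> *\<^sub>v v)"
  shows "mp_eigenpair n m (perturb0 A D) \<mu> v"
proof -
  have P: "mp_eval A m \<mu> \<in> carrier_mat n n" using mp_eval_carrier A by simp
  have Q: "mp_eval (perturb0 A D) m \<mu> \<in> carrier_mat n n"
    using mp_eval_perturb0[OF A D] P D by simp
  have "mp_eval (perturb0 A D) m \<mu> *\<^sub>v v = mp_eval A m \<mu> *\<^sub>v v + D *\<^sub>v v"
    using mp_eval_perturb0[OF A D] add_mult_distrib_mat_vec[OF P D v(1)] by simp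
  also have "\<dots> = 0\<^sub>v n" using Dv P v(1) by auto
  finally have Qv: "mp_eval (perturb0 A D) m \<mu> *\<^sub>v v = 0\<^sub>v n" .
  then have "det (mp_eval (perturb0 A D) m \<mu>) = 0"
    using det_0_iff_vec_prod_zero[OF Q] v by blast
  with Qv v show ?thesis unfolding mp_eigenpair_def by simp
qed

lemma perturb0_on_mp_ball_boundary:
  assumes A: "\<forall>j\<le>m. A j \<in> carrier_mat n n" and D: "D \<in> carrier_mat n n" and n: "0 < n"
    and w: "\<forall>j\<le>m. 0 \<le> w j" "0 < w 0"
  shows "on_mp_ball_boundary n m A (spec_norm D / w 0) w (perturb0 A D)"
  unfolding on_mp_ball_boundary_def
proof (intro exI[of _ "\<lambda>j. if j = 0 then D else 0\<^sub>m n n"] conjI allI impI)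
  have "0 \<le> spec_norm D" using spec_norm_nonneg D n by simp
  then show "spec_norm ((\<lambda>j. if j = 0 then D else 0\<^sub>m n n) j) \<le> spec_norm D / w 0 * w j"
    if "j \<le> m" for j
    using that w spec_norm_zero_mat[OF n] by auto
qed (use A D w(2) in \<open>auto simp: perturb0_def\<close>)

theorem theorem2:
  fixes n m :: nat and A :: "nat \<Rightarrow> complex mat" and \<mu>1 \<mu>2 :: complex and w :: "nat \<Rightarrow> real"
    and u1 u2 v1 v2 :: "complex vec" and \<sigma>1 \<sigma>2 :: real
  assumes A_dim: "\<forall>j\<le>m. A j \<in> carrier_mat n n"
    and lead: "det (A m) \<noteq> 0"
    and mu_ne: "\<mu>1 \<noteq> \<mu>2"
    and w_nonneg: "\<forall>j\<le>m. 0 \<le> w j"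
    and w0_pos: "0 < w 0"
    and max0: "\<forall>\<gamma>::real. 0 \<le> \<gamma> \<longrightarrow> sval (Fmat n A m \<mu>1 \<mu>2 \<gamma>) (2*n - 1) \<le> sval (Fmat n A m \<mu>1 \<mu>2 0) (2*n - 1)"
    and vecs: "u1 \<in> carrier_vec n" "u2 \<in> carrier_vec n" "v1 \<in> carrier_vec n" "v2 \<in> carrier_vec n"
    and unit: "vnorm u1 = 1" "vnorm u2 = 1" "vnorm v1 = 1" "vnorm v2 = 1"
    and sig1: "\<sigma>1 = sval (mp_eval A m \<mu>1) n"
    and sig2: "\<sigma>2 = sval (mp_eval A m \<mu>2) n"
    and sv1: "mp_eval A m \<mu>1 *\<^sub>v v1 = complex_of_real \<sigma>1 \<cdot>\<^sub>v u1"
             "mat_adjoint (mp_eval A m \<mu>1) *\<^sub>v u1 = complex_of_real \<sigma>1 \<cdot>\<^sub>v v1"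
    and sv2: "mp_eval A m \<mu>2 *\<^sub>v v2 = complex_of_real \<sigma>2 \<cdot>\<^sub>v u2"
             "mat_adjoint (mp_eval A m \<mu>2) *\<^sub>v u2 = complex_of_real \<sigma>2 \<cdot>\<^sub>v v2"
    and indep: "\<forall>a b :: complex. a \<cdot>\<^sub>v v1 + b \<cdot>\<^sub>v v2 = 0\<^sub>v n \<longrightarrow> a = 0 \<and> b = 0"
  defines "\<Delta>0 \<equiv> - (mat_of_cols n [u1, u2]
                    * mat_diag 2 (\<lambda>i. if i = 0 then complex_of_real \<sigma>1 else complex_of_real \<sigma>2)
                    * pinv (mat_of_cols n [v1, v2]))"
  shows "on_mp_ball_boundary n m A (spec_norm \<Delta>0 / w 0) w (perturb0 A \<Delta>0)
         \<and> mp_eigenpair n m (perturb0 A \<Delta>0) \<mu>1 v1 \<and> mp_eigenpair n m (perturb0 A \<Delta>0) \<mu>2 v2"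
proof -
  define f where "f = (\<lambda>i::nat. if i = 0 then complex_of_real \<sigma>1 else complex_of_real \<sigma>2)"
  define V where "V = mat_of_cols n [v1, v2]"
  define W where "W = mat_of_cols n [u1, u2] * mat_diag 2 f"
  have V: "V \<in> carrier_mat n 2" "full_col_rank V"
    unfolding V_def using full_col_rank_mat_of_cols2[OF vecs(3,4) indep] by (auto simp: numeral_2_eq_2)
  have W: "W \<in> carrier_mat n 2"
    unfolding W_def using mat_of_cols_carrier(1)[of n "[u1, u2]"] by (auto simp: numeral_2_eq_2)
  have D: "\<Delta>0 = - (W * pinv V)" unfolding \<Delta>0_def W_def V_def f_def ..
  have Dc: "\<Delta>0 \<in> carrier_mat n n" using D W pinv_left_inverse(1)[OF V] by auto
  have D_col: "\<Delta>0 *\<^sub>v col V j = - col W j" if "j < 2" for j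
    using mult_pinv_col[OF V W that] D V W pinv_left_inverse(1)[OF V] by simp
  have "col W 0 = complex_of_real \<sigma>1 \<cdot>\<^sub>v u1" "col W 1 = complex_of_real \<sigma>2 \<cdot>\<^sub>v u2"
    using col_mat_of_cols_mult_mat_diag[of _ "[u1, u2]" n f] vecs unfolding W_def f_def
    by (auto simp: numeral_2_eq_2)
  moreover have "col V 0 = v1" "col V 1 = v2" unfolding V_def using vecs by auto
  ultimately have "\<Delta>0 *\<^sub>v v1 = - (mp_eval A m \<mu>1 *\<^sub>v v1)" "\<Delta>0 *\<^sub>v v2 = - (mp_eval A m \<mu>2 *\<^sub>v v2)"
    using D_col[of 0] D_col[of 1] sv1(1) sv2(1) by auto
  moreover have "v1 \<noteq> 0\<^sub>v n" "v2 \<noteq> 0\<^sub>v n" using unit(3,4) by auto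
  moreover have "0 < n" using dim_vec_pos_if_vnorm_eq_1[OF unit(3)] vecs(3) by simp
  ultimately show ?thesis
    using perturb0_on_mp_ball_boundary[OF A_dim Dc _ w_nonneg w0_pos]
      mp_eigenpair_perturb0[OF A_dim Dc] vecs(3,4) by blast
qed

end
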